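(* There is an absolute constant $c_0>0$ such that if $\kappa\le c_0$, $B\sqrt\Gamma\le c_0\kappa$, and $s\Delta>4\pi$ with $\Delta=12B\Gamma/\kappa$, then $$\mathcal B_{\rm SW}\subseteq\bigcup_{i=1}^s\Bigl(\mathcal B_0^{(i)}\cup\bigcup_{\alpha=1}^3\bigcup_{j=1}^B\mathcal B^{(i)}_{\alpha,j}\Bigr).$$
   Context: Angles $\theta_{\boldsymbol r}$ with $\boldsymbol S_{\boldsymbol r}=(\cos\theta_{\boldsymbol r},\sin\theta_{\boldsymbol r})$, $S^{(\alpha)}_{\boldsymbol r}=\cos(\theta_{\boldsymbol r}-\phi_\alpha)$ with $\phi_1=0,\phi_2=\tfrac{2\pi}3,\phi_3=-\tfrac{2\pi}3$ (directions of $\hat{\mathrm a},\hat{\mathrm b},\hat{\mathrm c}$). $\Lambda_B=\{0,\dots,B\}^3$. The block is good if (a) $|S^{(\alpha)}_{\boldsymbol r}-S^{(\alpha)}_{\boldsymbol r+\hat{\mathrm e}_\alpha}|<\Gamma$ for all nearest-neighbour pairs in $\Lambda_B$ and (b) for some $\tau\in\{1,\dots,6\}$, $|\theta_{\boldsymbol r}-\tfrac\pi3\tau|<2\kappa$ (mod $2\pi$) for all $\boldsymbol r\in\Lambda_B$; $\mathcal B$ is the complement (bad). $\mathcal B_{\rm E}$ is the event that $|S^{(\alpha)}_{\boldsymbol r}-S^{(\alpha)}_{\boldsymbol r+\hat{\mathrm e}_\alpha}|\ge\Gamma$ for some pair in $\Lambda_B$, and $\mathcal B_{\rm SW}=\mathcal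 B\setminus\mathcal B_{\rm E}$. Let $\theta^\star_1,\dots,\theta^\star_s$ be $s$ uniformly spaced points on the circle. $\mathcal B^{(i)}_0$ is the event that the block is bad and $|\theta_{\boldsymbol r}-\theta_i^\star|<\Delta$ for all $\boldsymbol r\in\Lambda_B$. For $\alpha\in\{1,2,3\}$ and $j\in\{1,\dots,B\}$, let $\mathbb H_j$ be the set of sites whose $\alpha$-th coordinate equals $j$, and $\tilde\theta_i^\star=2\phi_\alpha-\theta_i^\star$. If the angle between $\theta^\star_i$ and $\phi_\alpha$ lies in $(-\kappa,\kappa)$ or $(\pi-\kappa,\pi+\kappa)$ (mod $2\pi$), $\mathcal B^{(i)}_{\alpha,j}=\emptyset$; otherwise $\mathcal B^{(i)}_{\alpha,j}$ is the set of configurations in $\mathcal B_{\rm SW}$ with $|\theta_{\boldsymbol r}-\theta^\star_i|<\Delta$ for all $\boldsymbol r\in\Lambda_B\cap\mathbb H_{j-1}$ and $|\theta_{\boldsymbol r}-\tilde\theta^\star_i|<\Delta$ for all $\boldsymbol r\in\Lambda_B\cap\mathbb H_j$. *)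

theory Defs
  imports Complex_Main
begin

type_synonym site = "nat \<times> nat \<times> nat"
type_synonym config = "site \<Rightarrow> real"

text \<open>Lattice directions a, b, c = unit vectors e_1, e_2, e_3; alpha in {1,2,3}.\<close>
fun coord :: "nat \<Rightarrow> site \<Rightarrow> nat" where
  "coord a (x, y, z) = (if a = 1 then x else if a = 2 then y else z)"

fun shift :: "nat \<Rightarrow> site \<Rightarrow> site" where
  "shift a (x, y, z) = (if a = 1 then (x + 1, y, z) else if a = 2 then (x, y + 1, z) else (x, y, z + 1))"

definition phi :: "nat \<Rightarrow> real" where
  "phi a = (if a = 1 then 0 else if a = 2 then 2 * pi / 3 else - 2 * pi / 3)"

definition Scomp :: "nat \<Rightarrow> config \<Rightarrow> site \<Rightarrow> real" where
  "Scomp a \<theta> r = cos (\<theta> r - phi a)"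

definition Lambda :: "nat \<Rightarrow> site set" where
  "Lambda B = {0..B} \<times> {0..B} \<times> {0..B}"

definition near_mod :: "real \<Rightarrow> real \<Rightarrow> real \<Rightarrow> bool" where
  "near_mod x y d \<longleftrightarrow> (\<exists>k::int. \<bar>x - y + 2 * pi * of_int k\<bar> < d)"

definition good_edges :: "nat \<Rightarrow> real \<Rightarrow> config \<Rightarrow> bool" where
  "good_edges B \<Gamma> \<theta> \<longleftrightarrow> (\<forall>a\<in>{1,2,3}. \<forall>r. r \<in> Lambda B \<longrightarrow> shift a r \<in> Lambda B \<longrightarrow>
      \<bar>Scomp a \<theta> r - Scomp a \<theta> (shift a r)\<bar> < \<Gamma>)"

definition good_block :: "nat \<Rightarrow> real \<Rightarrow> real \<Rightarrow> config \<Rightarrow> bool" where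
  "good_block B \<Gamma> \<kappa> \<theta> \<longleftrightarrow> good_edges B \<Gamma> \<theta> \<and>
     (\<exists>\<tau>\<in>{1..6::nat}. \<forall>r\<in>Lambda B. near_mod (\<theta> r) (pi / 3 * real \<tau>) (2 * \<kappa>))"

definition Bad :: "nat \<Rightarrow> real \<Rightarrow> real \<Rightarrow> config set" where
  "Bad B \<Gamma> \<kappa> = {\<theta>. \<not> good_block B \<Gamma> \<kappa> \<theta>}"

definition Bad_E :: "nat \<Rightarrow> real \<Rightarrow> config set" where
  "Bad_E B \<Gamma> = {\<theta>. \<not> good_edges B \<Gamma> \<theta>}"

definition Bad_SW :: "nat \<Rightarrow> real \<Rightarrow> real \<Rightarrow> config set" where
  "Bad_SW B \<Gamma> \<kappa> = Bad B \<Gamma> \<kappa> - Bad_E B \<Gamma>"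

definition theta_star :: "real \<Rightarrow> nat \<Rightarrow> nat \<Rightarrow> real" where
  "theta_star t0 s i = t0 + 2 * pi * real i / real s"

definition Bad0 :: "nat \<Rightarrow> real \<Rightarrow> real \<Rightarrow> real \<Rightarrow> real \<Rightarrow> config set" where
  "Bad0 B \<Gamma> \<kappa> \<Delta> ts = {\<theta>\<in>Bad B \<Gamma> \<kappa>. \<forall>r\<in>Lambda B. near_mod (\<theta> r) ts \<Delta>}"

definition hyperplane :: "nat \<Rightarrow> nat \<Rightarrow> site set" where
  "hyperplane a j = {r. coord a r = j}"

definition Bad_aj :: "nat \<Rightarrow> real \<Rightarrow> real \<Rightarrow> real \<Rightarrow> real \<Rightarrow> nat \<Rightarrow> nat \<Rightarrow> config set" where
  "Bad_aj B \<Gamma> \<kappa> \<Delta> ts a j =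
    (if near_mod ts (phi a) \<kappa> \<or> near_mod ts (phi a + pi) \<kappa> then {}
     else {\<theta>\<in>Bad_SW B \<Gamma> \<kappa>.
            (\<forall>r\<in>Lambda B \<inter> hyperplane a (j - 1). near_mod (\<theta> r) ts \<Delta>) \<and>
            (\<forall>r\<in>Lambda B \<inter> hyperplane a j. near_mod (\<theta> r) (2 * phi a - ts) \<Delta>)})"

end

theory Submission
  imports Defs "HOL-Analysis.Complex_Transcendental"
begin

(* Write the spins as unit complex numbers z_r = cis theta_r and let mirror a be the reflection
   in the axis phi_a. An edge in direction a satisfies
   |z' - z| |z' - mirror a z| = 2 |S^(a)_r - S^(a)_(r + e_a)| < 2 Gamma,
   so along every edge either z' is close to z or z' is close to mirror a z.
   If some spin is within 3 kappa/2 of a sixth root of unity, the spins can be labelled by sixth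
   roots of unity compatibly with this alternative. Otherwise the spins keep away from the
   sixth roots, z and mirror a z are then at distance >= 21 kappa/10, one factor of the edge
   product is O(Gamma/kappa), and the labels can be taken from the orbit of one spin under
   the group generated by the three mirrors. As the three mirrors pairwise do not commute,
   going around plaquettes shows that a non-constant labelling jumps across a whole lattice
   plane. A constant labelling contradicts badness (first case) or gives B_0^(i) (second case);
   a jump gives B^(i)_(alpha,j), with theta*_i chosen next to the spins of plane j - 1. *)

section \<open>Chords of the unit circle\<close>

lemma cis_add_2pi_int: "cis (x + 2 * pi * of_int k) = cis x"
  by (simp flip: cis_mult)

lemma norm_cis_diff: "cmod (cis a - cis b) = 2 * \<bar>sin ((a - b) / 2)\<bar>"
proof -
  have "(cmod (cis a - cis b))\<^sup>2 = 2 - 2 * cos (a - b)"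
  proof -
    have "(cmod (cis a - cis b))\<^sup>2 = ((cos a)\<^sup>2 + (sin a)\<^sup>2) + ((cos b)\<^sup>2 + (sin b)\<^sup>2)
        - 2 * (cos a * cos b + sin a * sin b)"
      by (simp add: cmod_power2 power2_diff algebra_simps)
    then show ?thesis
      by (simp add: cos_diff)
  qed
  also have "cos (a - b) = 1 - 2 * (sin ((a - b) / 2))\<^sup>2"
  proof -
    have "2 * ((a - b) / 2) = a - b"
      by simp
    then show ?thesis
      using cos_double_sin[of "(a - b) / 2"] by metis
  qed
  finally have "(cmod (cis a - cis b))\<^sup>2 = (2 * \<bar>sin ((a - b) / 2)\<bar>)\<^sup>2"
    by (simp add: power_mult_distrib)
  then show ?thesis
    by (rule power2_eq_imp_eq) simp_all
qed

lemma norm_cis_diff_le: "cmod (cis a - cis b) \<le> \<bar>a - b\<bar>"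
  using abs_sin_x_le_abs_x[of "(a - b) / 2"] by (simp add: norm_cis_diff)

lemma norm_cis_diff_less_if_near_mod:
  assumes "near_mod x y d"
  shows "cmod (cis x - cis y) < d"
proof -
  obtain k :: int where "\<bar>x - y + 2 * pi * of_int k\<bar> < d"
    using assms unfolding near_mod_def by blast
  then have k: "\<bar>x - (y - 2 * pi * of_int k)\<bar> < d"
    by (simp add: algebra_simps)
  have "cis y = cis (y - 2 * pi * of_int k + 2 * pi * of_int k)"
    by simp
  then have "cis y = cis (y - 2 * pi * of_int k)"
    by (simp only: cis_add_2pi_int)
  then show ?thesis
    using norm_cis_diff_le[of x "y - 2 * pi * of_int k"] k by simp
qed

lemma near_mod_if_norm_cis_diff_less:
  assumes "0 < d" and less: "cmod (cis x - cis y) < 2 * sin (d / 2)"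
  shows "near_mod x y d"
proof -
  define t where "t = normalize_angle (x - y)"
  have t_bounds: "- pi < t" "t \<le> pi"
    unfolding t_def by auto
  have "cmod (cis x - cis y) = cmod (cis (x - y) - 1)"
  proof -
    have "cis x - cis y = cis y * (cis (x - y) - 1)"
      by (simp add: algebra_simps cis_mult)
    then show ?thesis
      by (simp add: norm_mult)
  qed
  also have "\<dots> = 2 * \<bar>sin (t / 2)\<bar>"
    using norm_cis_diff[of t 0] by (simp add: t_def)
  also have "\<bar>sin (t / 2)\<bar> = sin (\<bar>t\<bar> / 2)"
  proof (cases "0 \<le> t")
    case True
    then show ?thesis
      using t_bounds by (simp add: sin_ge_zero)
  next
    case False
    then have "0 \<le> sin (- t / 2)"
      using t_bounds by (intro sin_ge_zero) auto
    then show ?thesis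
      using False by simp
  qed
  finally have norm_eq: "cmod (cis x - cis y) = 2 * sin (\<bar>t\<bar> / 2)" .
  have "\<bar>t\<bar> < d"
  proof (rule ccontr)
    assume "\<not> \<bar>t\<bar> < d"
    then have "sin (d / 2) \<le> sin (\<bar>t\<bar> / 2)"
      using \<open>0 < d\<close> t_bounds by (intro sin_monotone_2pi_le) auto
    then show False
      using less norm_eq by simp
  qed
  then show ?thesis
    unfolding near_mod_def t_def normalize_angle_def
    by (intro exI[of _ "- \<lceil>(x - y) / (2 * pi) - 1 / 2\<rceil>"]) (simp add: algebra_simps)
qed

lemma sin_ge_cubic:
  fixes x :: real
  assumes "0 \<le> x"
  shows "x - x ^ 3 / 6 \<le> sin x"
proof -
  have "(\<Sum>m<3. sin_coeff m * x ^ m) = x"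
    by (simp add: eval_nat_numeral sin_coeff_def)
  then have "\<bar>sin x - x\<bar> \<le> x ^ 3 / 6"
    using Maclaurin_sin_bound[of x 3] assms by (simp add: eval_nat_numeral)
  then show ?thesis
    by linarith
qed

lemma near_mod_if_norm_cis_diff_small:
  assumes "0 < d" "d \<le> 1" and small: "cmod (cis x - cis y) < 9 / 10 * d"
  shows "near_mod x y d"
proof (rule near_mod_if_norm_cis_diff_less)
  have "d ^ 3 \<le> d"
    using assms by (simp add: power_le_one_iff power3_eq_cube mult_le_one)
  then have "9 / 10 * d \<le> 2 * (d / 2 - (d / 2) ^ 3 / 6)"
    using assms by (simp add: power_divide)
  also have "\<dots> \<le> 2 * sin (d / 2)"
    using sin_ge_cubic[of "d / 2"] assms by simp
  finally show "cmod (cis x - cis y) < 2 * sin (d / 2)"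
    using small by simp
qed (use assms in simp)

lemma theta_star_dense:
  assumes "1 \<le> s"
  shows "\<exists>i\<in>{1..s}. cmod (cis x - cis (theta_star t0 s i)) \<le> pi / real s"
proof -
  define u where "u = (x - t0) * real s / (2 * pi)"
  define n where "n = round u"
  define q where "q = (n - 1) div int s"
  define i where "i = nat ((n - 1) mod int s) + 1"
  have s_pos: "0 < int s"
    using assms by simp
  have "nat ((n - 1) mod int s) < s"
    using s_pos by (simp add: nat_less_iff)
  then have i: "i \<in> {1..s}"
    by (simp add: i_def)
  have "int i = n - int s * q"
    using s_pos div_mult_mod_eq[of "n - 1" "int s"] by (simp add: i_def q_def algebra_simps)
  then have i_eq: "real i = real_of_int n - real s * real_of_int q"
    by (metis of_int_diff of_int_mult of_int_of_nat_eq)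
  have "theta_star t0 s i = (t0 + 2 * pi * of_int n / real s) + 2 * pi * of_int (- q)"
    using s_pos unfolding theta_star_def i_eq by (simp add: field_simps)
  then have cis_i: "cis (theta_star t0 s i) = cis (t0 + 2 * pi * of_int n / real s)"
    by (simp only: cis_add_2pi_int)
  have "x - (t0 + 2 * pi * of_int n / real s) = 2 * pi * (u - of_int n) / real s"
    using s_pos unfolding u_def by (simp add: field_simps)
  moreover have "\<bar>u - of_int n\<bar> \<le> 1 / 2"
    unfolding n_def using of_int_round_ge[of u] of_int_round_le[of u] by linarith
  ultimately have "\<bar>x - (t0 + 2 * pi * of_int n / real s)\<bar> \<le> pi / real s"
    using s_pos by (simp add: abs_mult divide_right_mono)
  then show ?thesis
    using i cis_i norm_cis_diff_le[of x] by (metis order_trans)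
qed

section \<open>Reflections and sixth roots of unity\<close>

definition omega :: complex where
  "omega = cis (2 * pi / 3)"

lemma omega_eq: "omega = Complex (- 1 / 2) (sqrt 3 / 2)"
  by (simp add: omega_def complex_eq_iff cos_120 sin_120)

lemma omega_simps [simp]:
  "omega * omega = cnj omega" "omega * cnj omega = 1" "cnj omega * omega = 1"
  "cnj omega * cnj omega = omega"
  "omega \<noteq> 1" "cnj omega \<noteq> 1" "omega \<noteq> cnj omega" "cnj omega \<noteq> omega"
  "cmod omega = 1"
  by (simp_all add: omega_eq complex_eq_iff cmod_def power2_eq_square)

lemma omega_mult_simps [simp]:
  "omega * (omega * x) = cnj omega * x" "omega * (cnj omega * x) = x"
  "cnj omega * (omega * x) = x" "cnj omega * (cnj omega * x) = omega * x"
  by (simp_all flip: mult.assoc)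

definition mirror :: "nat \<Rightarrow> complex \<Rightarrow> complex" where
  "mirror a x = cis (2 * phi a) * cnj x"

lemma mirror_simps:
  "mirror 1 x = cnj x" "mirror (Suc 0) x = cnj x"
  "mirror 2 x = cnj omega * cnj x" "mirror 3 x = omega * cnj x"
proof -
  have "cis (2 * phi 2) = cis (- (2 * pi / 3) + 2 * pi * of_int 1)"
    by (simp add: phi_def)
  also have "\<dots> = cnj omega"
    by (simp only: cis_add_2pi_int) (simp add: omega_def cis_cnj)
  finally have 2: "cis (2 * phi 2) = cnj omega" .
  have "cis (2 * phi 3) = cis (2 * pi / 3 + 2 * pi * of_int (- 1))"
    by (simp add: phi_def)
  also have "\<dots> = omega"
    by (simp only: cis_add_2pi_int) (simp add: omega_def)
  finally have 3: "cis (2 * phi 3) = omega" .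
  show "mirror 1 x = cnj x" "mirror (Suc 0) x = cnj x"
    by (simp_all add: mirror_def phi_def)
  show "mirror 2 x = cnj omega * cnj x" "mirror 3 x = omega * cnj x"
    by (simp_all add: mirror_def 2 3)
qed

lemma mirror_mirror [simp]: "mirror a (mirror a x) = x"
  by (simp add: mirror_def cis_cnj mult.assoc[symmetric] cis_mult)

lemma norm_mirror_diff: "cmod (mirror a x - mirror a y) = cmod (x - y)"
proof -
  have "mirror a x - mirror a y = cis (2 * phi a) * cnj (x - y)"
    by (simp add: mirror_def algebra_simps)
  then show ?thesis
    by (simp add: norm_mult del: complex_cnj_diff)
qed

lemma mirror_cis: "mirror a (cis t) = cis (2 * phi a - t)"
  by (simp add: mirror_def cis_cnj cis_mult)

lemma mirror_fixes: "mirror a (cis (phi a)) = cis (phi a)" "mirror a (- cis (phi a)) = - cis (phi a)"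
  by (simp_all add: mirror_def cis_cnj cis_mult)

lemma mirrors_noncommuting:
  assumes "a \<in> {1,2,3}" "b \<in> {1,2,3}" "a \<noteq> b" "x \<noteq> 0"
  shows "mirror a (mirror b x) \<noteq> x" "mirror a (mirror b x) \<noteq> mirror b (mirror a x)"
  using assms by (auto simp: mirror_simps)

lemma norm_diff_mirror_eq:
  assumes "cmod x = 1"
  shows "cmod (x - mirror a x) = cmod (x - cis (phi a)) * cmod (x + cis (phi a))"
proof -
  define m where "m = cis (phi a)"
  have "(x - m) * (x + m) = x * (x - m * m * cnj x)"
    using complex_norm_square[of x] assms by (simp add: algebra_simps)
  then have "cmod (x - m) * cmod (x + m) = cmod x * cmod (x - m * m * cnj x)"
    by (metis norm_mult)
  then have "cmod (x - m) * cmod (x + m) = cmod (x - m * m * cnj x)"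
    using assms by simp
  moreover have "mirror a x = m * m * cnj x"
    by (simp add: mirror_def m_def cis_mult)
  ultimately show ?thesis
    by (simp add: m_def)
qed

lemma norm_cis_diff_mult_mirror:
  "cmod (cis u - cis v) * cmod (cis v - mirror a (cis u)) = 2 * \<bar>cos (u - phi a) - cos (v - phi a)\<bar>"
proof -
  have "cos (u - phi a) - cos (v - phi a) = 2 * sin ((v - (2 * phi a - u)) / 2) * sin ((v - u) / 2)"
    using cos_diff_cos[of "u - phi a" "v - phi a"] by (simp add: field_simps)
  moreover have "sin ((v - u) / 2) = - sin ((u - v) / 2)"
    by (metis minus_diff_eq minus_divide_left sin_minus)
  ultimately show ?thesis
    by (simp add: mirror_cis norm_cis_diff abs_mult)
qed

lemma norm_diff_mirror_ge:
  assumes "cmod x = 1" "0 \<le> e" "e \<le> cmod (x - cis (phi a))" "e \<le> cmod (x + cis (phi a))"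
  shows "7 / 5 * e \<le> cmod (x - mirror a x)"
proof -
  define d1 d2 where "d1 = cmod (x - cis (phi a))" and "d2 = cmod (x + cis (phi a))"
  have "d1\<^sup>2 + d2\<^sup>2 = 2 * ((Re x)\<^sup>2 + (Im x)\<^sup>2) + 2 * ((cos (phi a))\<^sup>2 + (sin (phi a))\<^sup>2)"
    unfolding d1_def d2_def cmod_power2 by (simp add: power2_sum power2_diff algebra_simps)
  also have "\<dots> = 4"
    using assms(1) by (simp add: cmod_power2[symmetric])
  finally have sum_squares: "d1\<^sup>2 + d2\<^sup>2 = 4" .
  have "7 / 5 \<le> d1 \<or> 7 / 5 \<le> d2"
  proof (rule ccontr)
    assume "\<not> ?thesis"
    then have "d1\<^sup>2 < (7 / 5)\<^sup>2" "d2\<^sup>2 < (7 / 5)\<^sup>2"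
      by (auto simp: d1_def d2_def intro!: power_strict_mono)
    then show False
      using sum_squares by (simp add: power2_eq_square)
  qed
  then have "7 / 5 * e \<le> d1 * d2"
    using assms unfolding d1_def[symmetric] d2_def[symmetric]
    by (metis mult.commute mult_mono norm_ge_zero d1_def d2_def)
  then show ?thesis
    using norm_diff_mirror_eq[OF assms(1)] by (simp add: d1_def d2_def)
qed

definition hex_roots :: "complex set" where
  "hex_roots = {1, - 1, omega, - omega, cnj omega, - cnj omega}"

lemma finite_hex_roots [simp]: "finite hex_roots"
  by (simp add: hex_roots_def)

lemma norm_hex_root: "m \<in> hex_roots \<Longrightarrow> cmod m = 1"
  by (auto simp: hex_roots_def)

lemma omega_mult_hex_roots: "m \<in> hex_roots \<Longrightarrow> omega * m \<in> hex_roots" "m \<in> hex_roots \<Longrightarrow> cnj omega * m \<in> hex_roots"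
  by (auto simp: hex_roots_def)

lemma mirror_hex_roots: "a \<in> {1,2,3} \<Longrightarrow> m \<in> hex_roots \<Longrightarrow> mirror a m \<in> hex_roots"
  by (auto simp: hex_roots_def mirror_simps)

lemma hex_roots_separated:
  assumes "m \<in> hex_roots" "m' \<in> hex_roots" "m \<noteq> m'"
  shows "1 \<le> cmod (m - m')"
proof -
  have "1 \<le> (Re (m - m'))\<^sup>2 + (Im (m - m'))\<^sup>2"
    using assms by (auto simp: hex_roots_def omega_eq power2_eq_square)
  then show ?thesis
    by (simp add: cmod_def)
qed

lemma cis_phi_in_hex_roots:
  assumes "a \<in> {1,2,3}"
  shows "cis (phi a) \<in> hex_roots" "- cis (phi a) \<in> hex_roots"
proof -
  have "cis (phi a) \<in> {1, omega, cnj omega}"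
    using assms by (auto simp: phi_def omega_def cis_cnj)
  then show "cis (phi a) \<in> hex_roots" "- cis (phi a) \<in> hex_roots"
    by (auto simp: hex_roots_def)
qed

lemma hex_root_eq_cis:
  assumes "m \<in> hex_roots"
  shows "\<exists>\<tau>\<in>{1..6::nat}. m = cis (pi / 3 * real \<tau>)"
proof -
  have "cis (pi / 3) = - cnj omega"
    by (simp add: omega_eq complex_eq_iff cos_60 sin_60)
  then have "cis (pi / 3 * real \<tau>) = (- cnj omega) ^ \<tau>" for \<tau>
    using Complex.DeMoivre[of "pi / 3" \<tau>] by (simp add: mult.commute)
  then have powers: "(\<lambda>\<tau>. cis (pi / 3 * real \<tau>)) = (\<lambda>\<tau>. (- cnj omega) ^ \<tau>)"
    by (rule ext)
  have "{1..6::nat} = {1,2,3,4,5,6}"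
    by auto
  then have "(\<lambda>\<tau>. cis (pi / 3 * real \<tau>)) ` {1..6} = hex_roots"
    unfolding powers by (auto simp: hex_roots_def eval_nat_numeral)
  then show ?thesis
    using assms by auto
qed

definition dihedral_orbit :: "complex \<Rightarrow> complex set" where
  "dihedral_orbit w = {w, omega * w, cnj omega * w, cnj w, cnj omega * cnj w, omega * cnj w}"

lemma finite_dihedral_orbit [simp]: "finite (dihedral_orbit w)"
  by (simp add: dihedral_orbit_def)

lemma self_in_dihedral_orbit: "w \<in> dihedral_orbit w"
  by (simp add: dihedral_orbit_def)

lemma mirror_dihedral_orbit: "a \<in> {1,2,3} \<Longrightarrow> p \<in> dihedral_orbit w \<Longrightarrow> mirror a p \<in> dihedral_orbit w"
  by (auto simp: dihedral_orbit_def mirror_simps)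

lemma norm_dihedral_orbit: "cmod w = 1 \<Longrightarrow> p \<in> dihedral_orbit w \<Longrightarrow> cmod p = 1"
  by (auto simp: dihedral_orbit_def norm_mult)

lemma dihedral_orbit_eq: "dihedral_orbit p = {p, omega * p, cnj omega * p, mirror 1 p, mirror 2 p, mirror 3 p}"
  by (auto simp: dihedral_orbit_def mirror_simps)

lemma dihedral_orbit_sym: "p \<in> dihedral_orbit w \<Longrightarrow> q \<in> dihedral_orbit w \<Longrightarrow> q \<in> dihedral_orbit p"
  by (auto simp: dihedral_orbit_def)

lemma dihedral_orbit_far_from_hex_roots:
  assumes far: "\<forall>m\<in>hex_roots. e \<le> cmod (w - m)" and p: "p \<in> dihedral_orbit w"
  shows "\<forall>m\<in>hex_roots. e \<le> cmod (p - m)"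
proof
  fix m assume m: "m \<in> hex_roots"
  have "cmod (omega * w - m) = cmod (w - cnj omega * m)" "cmod (cnj omega * w - m) = cmod (w - omega * m)"
    by (metis mult_1_left norm_mult omega_simps(2,3,9) complex_mod_cnj right_diff_distrib omega_mult_simps(2,3))+
  moreover have "cmod (mirror a w - m) = cmod (w - mirror a m)" for a
    using norm_mirror_diff[of a w "mirror a m"] by simp
  ultimately show "e \<le> cmod (p - m)"
    using p far m omega_mult_hex_roots mirror_hex_roots unfolding dihedral_orbit_eq by auto
qed

lemma dihedral_orbit_separated:
  assumes "cmod w = 1" "0 \<le> e" "e \<le> 1" and far: "\<forall>m\<in>hex_roots. e \<le> cmod (w - m)"
    and pq: "p \<in> dihedral_orbit w" "q \<in> dihedral_orbit w" "p \<noteq> q"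
  shows "7 / 5 * e \<le> cmod (p - q)"
proof -
  have p_unit: "cmod p = 1"
    using assms norm_dihedral_orbit by blast
  have p_far: "\<forall>m\<in>hex_roots. e \<le> cmod (p - m)"
    using dihedral_orbit_far_from_hex_roots[OF far pq(1)] .
  have "cmod (1 - omega) = sqrt 3" "cmod (1 - cnj omega) = sqrt 3"
    by (simp_all add: omega_eq cmod_def power2_eq_square)
  then have "cmod (p - omega * p) = sqrt 3" "cmod (p - cnj omega * p) = sqrt 3"
    using p_unit by (metis mult_1_left mult.commute norm_mult left_diff_distrib)+
  moreover have "7 / 5 * e \<le> sqrt 3"
  proof -
    have "7 / 5 \<le> sqrt 3"
      by (rule real_le_rsqrt) (simp add: power2_eq_square)
    then show ?thesis
      using assms(2,3) by linarith
  qed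
  moreover have "7 / 5 * e \<le> cmod (p - mirror a p)" if "a \<in> {1,2,3}" for a
    using norm_diff_mirror_ge[OF p_unit \<open>0 \<le> e\<close>] p_far cis_phi_in_hex_roots[OF that] by force
  ultimately show ?thesis
    using dihedral_orbit_sym[OF pq(1,2)] pq(3) unfolding dihedral_orbit_eq by auto
qed

section \<open>The block lattice\<close>

fun set_coord :: "nat \<Rightarrow> nat \<Rightarrow> site \<Rightarrow> site" where
  "set_coord a k (x, y, z) = (if a = 1 then (k, y, z) else if a = 2 then (x, k, z) else (x, y, k))"

lemma coord_set_coord [simp]: "coord a (set_coord a n u) = n"
  by (cases u) auto

lemma coord_set_coord_other: "a \<in> {1,2,3} \<Longrightarrow> b \<in> {1,2,3} \<Longrightarrow> b \<noteq> a \<Longrightarrow> coord b (set_coord a n u) = coord b u"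
  by (cases u) auto

lemma set_coord_coord [simp]: "set_coord a (coord a u) u = u"
  by (cases u) auto

lemma shift_set_coord: "shift a (set_coord a n u) = set_coord a (Suc n) u"
  by (cases u) auto

lemma set_coord_in_Lambda: "u \<in> Lambda B \<Longrightarrow> n \<le> B \<Longrightarrow> set_coord a n u \<in> Lambda B"
  by (cases u) (auto simp: Lambda_def)

lemma coord_le_of_in_Lambda: "u \<in> Lambda B \<Longrightarrow> coord a u \<le> B"
  by (cases u) (auto simp: Lambda_def)

lemma zero_in_Lambda [simp]: "(0, 0, 0) \<in> Lambda B"
  by (simp add: Lambda_def)

lemma coord_shift [simp]: "coord a (shift a r) = Suc (coord a r)"
  by (cases r) auto

lemma coord_shift_other: "a \<in> {1,2,3} \<Longrightarrow> b \<in> {1,2,3} \<Longrightarrow> b \<noteq> a \<Longrightarrow> coord b (shift a r) = coord b r"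
  by (cases r) auto

lemma shift_commute: "shift a (shift b r) = shift b (shift a r)"
  by (cases r) auto

lemma shift_in_Lambda_iff: "r \<in> Lambda B \<Longrightarrow> a \<in> {1,2,3} \<Longrightarrow> shift a r \<in> Lambda B \<longleftrightarrow> coord a r < B"
  by (cases r) (auto simp: Lambda_def)

lemma site_eqI:
  assumes "\<And>d. d \<in> {1,2,3} \<Longrightarrow> coord d x = coord d y"
  shows "x = (y :: site)"
  using assms[of 1] assms[of 2] assms[of 3] by (cases x, cases y) simp

lemma abs_diff_le_steps:
  fixes f :: "nat \<Rightarrow> real"
  assumes step: "\<And>n. n < N \<Longrightarrow> \<bar>f (Suc n) - f n\<bar> \<le> \<delta>" and "0 \<le> \<delta>" "m \<le> N" "n \<le> N"
  shows "\<bar>f m - f n\<bar> \<le> real N * \<delta>"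
proof -
  have along: "\<bar>f k - f i\<bar> \<le> real (k - i) * \<delta>" if "i \<le> k" "k \<le> N" for i k
    using that
  proof (induction k)
    case (Suc k)
    show ?case
    proof (cases "i = Suc k")
      case False
      then have "i \<le> k" "k < N"
        using Suc.prems by auto
      then have "\<bar>f k - f i\<bar> \<le> real (k - i) * \<delta>" "\<bar>f (Suc k) - f k\<bar> \<le> \<delta>"
        using Suc.IH step by simp_all
      moreover have "real (Suc k - i) = real (k - i) + 1"
        using \<open>i \<le> k\<close> by (simp add: Suc_diff_le)
      ultimately show ?thesis
        by (simp add: distrib_right)
    qed simp
  qed simp
  have bound: "real (k - i) * \<delta> \<le> real N * \<delta>" if "k \<le> N" for i k
    using that \<open>0 \<le> \<delta>\<close> by (intro mult_right_mono) auto
  show ?thesis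
  proof (cases "n \<le> m")
    case True
    then show ?thesis
      using along[OF True \<open>m \<le> N\<close>] bound[OF \<open>m \<le> N\<close>, of n] by linarith
  next
    case False
    then have "\<bar>f n - f m\<bar> \<le> real N * \<delta>"
      using along[of m n] bound[OF \<open>n \<le> N\<close>, of m] \<open>n \<le> N\<close> by simp
    then show ?thesis
      by (simp add: abs_minus_commute)
  qed
qed

lemma line_drift:
  fixes g :: "site \<Rightarrow> real"
  assumes "u \<in> Lambda B" "k \<le> B" "0 \<le> \<delta>"
    and "\<And>n. n < B \<Longrightarrow> \<bar>g (set_coord a (Suc n) u) - g (set_coord a n u)\<bar> \<le> \<delta>"
  shows "\<bar>g (set_coord a k u) - g u\<bar> \<le> real B * \<delta>"
  using abs_diff_le_steps[of B "\<lambda>n. g (set_coord a n u)" \<delta> k "coord a u"] assms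
  by (simp add: coord_le_of_in_Lambda)

lemma plane_drift:
  fixes g :: "site \<Rightarrow> real"
  assumes a: "a \<in> {1,2,3}" and "0 \<le> \<delta>"
    and step: "\<And>b r. b \<in> {1,2,3} \<Longrightarrow> b \<noteq> a \<Longrightarrow> r \<in> Lambda B \<Longrightarrow> shift b r \<in> Lambda B \<Longrightarrow>
      coord a r = coord a u \<Longrightarrow> \<bar>g (shift b r) - g r\<bar> \<le> \<delta>"
    and u: "u \<in> Lambda B" and v: "v \<in> Lambda B" "coord a v = coord a u"
  shows "\<bar>g v - g u\<bar> \<le> 2 * real B * \<delta>"
proof -
  have line: "\<bar>g (set_coord d k x) - g x\<bar> \<le> real B * \<delta>"
    if d: "d \<in> {1,2,3}" "d \<noteq> a" and x: "x \<in> Lambda B" "coord a x = coord a u" and "k \<le> B" for d x k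
  proof (rule line_drift[OF x(1) \<open>k \<le> B\<close> \<open>0 \<le> \<delta>\<close>])
    fix n assume "n < B"
    then show "\<bar>g (set_coord d (Suc n) x) - g (set_coord d n x)\<bar> \<le> \<delta>"
      using step[OF d, of "set_coord d n x"] x a d coord_set_coord_other[of d a]
      by (simp add: shift_set_coord set_coord_in_Lambda)
  qed
  obtain b c where bc: "b \<in> {1,2,3}" "c \<in> {1,2,3}" "b \<noteq> a" "c \<noteq> a" "b \<noteq> c"
  proof -
    consider "a = 1" | "a = 2" | "a = 3"
      using a by blast
    then show thesis
      using that[of 2 3] that[of 1 3] that[of 1 2] by cases auto
  qed
  define w where "w = set_coord b (coord b v) u"
  have w: "w \<in> Lambda B" "coord a w = coord a u" "coord b w = coord b v"
    unfolding w_def using u v a bc coord_set_coord_other[of b a]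
    by (auto intro: set_coord_in_Lambda coord_le_of_in_Lambda)
  have "set_coord c (coord c v) w = v"
  proof (rule site_eqI)
    fix d :: nat assume "d \<in> {1,2,3}"
    have other: "coord e (set_coord c (coord c v) w) = coord e w" if "e \<in> {1,2,3}" "e \<noteq> c" for e
      using coord_set_coord_other[of c e] bc that by simp
    have "d = a \<or> d = b \<or> d = c"
      using \<open>d \<in> {1,2,3}\<close> a bc by auto
    then show "coord d (set_coord c (coord c v) w) = coord d v"
      using other[of a] other[of b] w v a bc by (elim disjE) simp_all
  qed
  then have "\<bar>g v - g w\<bar> \<le> real B * \<delta>"
    using line[of c w "coord c v"] bc w v by (simp add: coord_le_of_in_Lambda)
  moreover have "\<bar>g w - g u\<bar> \<le> real B * \<delta>"
    unfolding w_def using line[of b u "coord b v"] bc u v by (simp add: coord_le_of_in_Lambda)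
  ultimately show ?thesis
    by linarith
qed

lemma block_drift:
  fixes g :: "site \<Rightarrow> real"
  assumes "0 \<le> \<delta>"
    and step: "\<And>b r. b \<in> {1,2,3} \<Longrightarrow> r \<in> Lambda B \<Longrightarrow> shift b r \<in> Lambda B \<Longrightarrow> \<bar>g (shift b r) - g r\<bar> \<le> \<delta>"
    and u: "u \<in> Lambda B" and v: "v \<in> Lambda B"
  shows "\<bar>g v - g u\<bar> \<le> 3 * real B * \<delta>"
proof -
  define w where "w = set_coord 1 (coord 1 v) u"
  have w: "w \<in> Lambda B" "coord 1 w = coord 1 v"
    unfolding w_def using u v by (auto intro: set_coord_in_Lambda coord_le_of_in_Lambda)
  have "\<bar>g w - g u\<bar> \<le> real B * \<delta>"
    unfolding w_def
  proof (rule line_drift[OF u _ \<open>0 \<le> \<delta>\<close>])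
    show "coord 1 v \<le> B"
      using v by (rule coord_le_of_in_Lambda)
    fix n assume "n < B"
    then show "\<bar>g (set_coord 1 (Suc n) u) - g (set_coord 1 n u)\<bar> \<le> \<delta>"
      using step[of 1 "set_coord 1 n u"] u by (simp add: shift_set_coord set_coord_in_Lambda)
  qed
  moreover have "\<bar>g v - g w\<bar> \<le> 2 * real B * \<delta>"
    using assms w by (intro plane_drift[where a = 1]) auto
  ultimately show ?thesis
    by linarith
qed

lemma plane_invariant:
  assumes a: "a \<in> {1,2,3}"
    and step: "\<And>b r. b \<in> {1,2,3} \<Longrightarrow> b \<noteq> a \<Longrightarrow> r \<in> Lambda B \<Longrightarrow> shift b r \<in> Lambda B \<Longrightarrow>
      coord a r = coord a u \<Longrightarrow> P (shift b r) \<longleftrightarrow> P r"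
    and "u \<in> Lambda B" "v \<in> Lambda B" "coord a v = coord a u" "P u"
  shows "P v"
proof -
  have "\<bar>of_bool (P v) - of_bool (P u)\<bar> \<le> 2 * real B * (0 :: real)"
    using assms by (intro plane_drift[where a = a]) auto
  then show ?thesis
    using \<open>P u\<close> by (cases "P v") simp_all
qed

lemma block_invariant:
  assumes step: "\<And>b r. b \<in> {1,2,3} \<Longrightarrow> r \<in> Lambda B \<Longrightarrow> shift b r \<in> Lambda B \<Longrightarrow> P (shift b r) \<longleftrightarrow> P r"
    and "u \<in> Lambda B" "v \<in> Lambda B" "P u"
  shows "P v"
proof -
  have "\<bar>of_bool (P v) - of_bool (P u)\<bar> \<le> 3 * real B * (0 :: real)"
    using assms by (intro block_drift) auto
  then show ?thesis
    using \<open>P u\<close> by (cases "P v") simp_all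
qed

section \<open>Labellings compatible with the reflections\<close>

definition edge_compatible :: "nat \<Rightarrow> (nat \<Rightarrow> 'x \<Rightarrow> 'x) \<Rightarrow> (site \<Rightarrow> 'x) \<Rightarrow> bool" where
  "edge_compatible B R L \<longleftrightarrow> (\<forall>a\<in>{1,2,3}. \<forall>r. r \<in> Lambda B \<longrightarrow> shift a r \<in> Lambda B \<longrightarrow>
     L (shift a r) = L r \<or> L (shift a r) = R a (L r))"

(* The label-level form of the event B^(i)_(alpha,j). *)
definition domain_wall :: "nat \<Rightarrow> (nat \<Rightarrow> 'x \<Rightarrow> 'x) \<Rightarrow> (site \<Rightarrow> 'x) \<Rightarrow> nat \<Rightarrow> nat \<Rightarrow> 'x \<Rightarrow> bool" where
  "domain_wall B R L a j p \<longleftrightarrow> R a p \<noteq> p \<and>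
     (\<forall>r\<in>Lambda B. coord a r = j - 1 \<longrightarrow> L r = p) \<and> (\<forall>r\<in>Lambda B. coord a r = j \<longrightarrow> L r = R a p)"

lemma plaquette:
  assumes inv: "\<And>x. Ra (Ra x) = x" "\<And>x. Rb (Rb x) = x"
    and nc: "Ra (Rb A) \<noteq> A" "Rb (Ra A) \<noteq> A" "Ra (Rb A) \<noteq> Rb (Ra A)"
    and edges: "La = A \<or> La = Ra A" "Lb = A \<or> Lb = Rb A" "Lab = La \<or> Lab = Rb La" "Lab = Lb \<or> Lab = Ra Lb"
  shows "La \<noteq> A \<longrightarrow> Lb = A \<and> Lab = La" and "Lab \<noteq> Lb \<longrightarrow> La \<noteq> A"
proof -
  have Ra_Rb: "Ra A \<noteq> Rb A"
  proof
    assume "Ra A = Rb A"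
    then have "Rb (Ra A) = A"
      using inv(2) by simp
    then show False
      using nc(2) by simp
  qed
  have Ra_inj: "Ra x = Ra y \<Longrightarrow> x = y" and Rb_inj: "Rb x = Rb y \<Longrightarrow> x = y" for x y
    using inv by metis+
  show "La \<noteq> A \<longrightarrow> Lb = A \<and> Lab = La"
  proof
    assume "La \<noteq> A"
    then have La: "La = Ra A"
      using edges(1) by blast
    show "Lb = A \<and> Lab = La"
    proof (cases "Lb = A")
      case True
      then show ?thesis
        using edges(3,4) La nc(2) by auto
    next
      case False
      then have "Lb = Rb A"
        using edges(2) by blast
      then show ?thesis
        using edges(3,4) La \<open>La \<noteq> A\<close> False Ra_Rb nc(3) Ra_inj Rb_inj by metis
    qed
  qed
  show "Lab \<noteq> Lb \<longrightarrow> La \<noteq> A"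
  proof (intro impI notI)
    assume "Lab \<noteq> Lb" and La: "La = A"
    then have "Lab = Ra Lb" "Lab = A \<or> Lab = Rb A"
      using edges(3,4) by auto
    then show False
      using edges(2) \<open>Lab \<noteq> Lb\<close> Ra_Rb nc(1) by auto
  qed
qed

lemma edge_compatibleD:
  "edge_compatible B R L \<Longrightarrow> a \<in> {1,2,3} \<Longrightarrow> r \<in> Lambda B \<Longrightarrow> shift a r \<in> Lambda B \<Longrightarrow>
    L (shift a r) = L r \<or> L (shift a r) = R a (L r)"
  unfolding edge_compatible_def by blast

lemma label_jump_transported:
  assumes inv: "\<And>a x. a \<in> {1,2,3} \<Longrightarrow> R a (R a x) = x"
    and nc: "\<And>a b r. a \<in> {1,2,3} \<Longrightarrow> b \<in> {1,2,3} \<Longrightarrow> a \<noteq> b \<Longrightarrow> r \<in> Lambda B \<Longrightarrow>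
      R a (R b (L r)) \<noteq> L r \<and> R a (R b (L r)) \<noteq> R b (R a (L r))"
    and compat: "edge_compatible B R L"
    and a: "a \<in> {1,2,3}" and b: "b \<in> {1,2,3}" "b \<noteq> a"
    and r: "r \<in> Lambda B" "shift b r \<in> Lambda B" "coord a r < B"
  shows "L (shift a r) \<noteq> L r \<longrightarrow> L (shift b r) = L r \<and> L (shift a (shift b r)) = L (shift a r)"
    and "L (shift a (shift b r)) \<noteq> L (shift b r) \<longrightarrow> L (shift a r) \<noteq> L r"
proof -
  have ra: "shift a r \<in> Lambda B" and rab: "shift a (shift b r) \<in> Lambda B"
    using r a b coord_shift_other[of b a r] by (simp_all add: shift_in_Lambda_iff)
  have rba: "shift b (shift a r) \<in> Lambda B"
    using rab by (simp only: shift_commute)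
  have "L (shift b (shift a r)) = L (shift a r) \<or> L (shift b (shift a r)) = R b (L (shift a r))"
    using edge_compatibleD[OF compat b(1) ra rba] .
  then have e3: "L (shift a (shift b r)) = L (shift a r) \<or> L (shift a (shift b r)) = R b (L (shift a r))"
    by (simp only: shift_commute[of a b r])
  have ab: "a \<noteq> b"
    using b(2) by simp
  show "L (shift a r) \<noteq> L r \<longrightarrow> L (shift b r) = L r \<and> L (shift a (shift b r)) = L (shift a r)"
    and "L (shift a (shift b r)) \<noteq> L (shift b r) \<longrightarrow> L (shift a r) \<noteq> L r"
    using plaquette[OF inv[OF a] inv[OF b(1)] _ _ _ edge_compatibleD[OF compat a r(1) ra]
        edge_compatibleD[OF compat b(1) r(1,2)] e3 edge_compatibleD[OF compat a r(2) rab]]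
      nc[OF a b(1) ab r(1)] nc[OF b(1) a b(2) r(1)]
    by blast+
qed

lemma constant_or_domain_wall:
  assumes inv: "\<And>a x. a \<in> {1,2,3} \<Longrightarrow> R a (R a x) = x"
    and nc: "\<And>a b r. a \<in> {1,2,3} \<Longrightarrow> b \<in> {1,2,3} \<Longrightarrow> a \<noteq> b \<Longrightarrow> r \<in> Lambda B \<Longrightarrow>
      R a (R b (L r)) \<noteq> L r \<and> R a (R b (L r)) \<noteq> R b (R a (L r))"
    and compat: "edge_compatible B R L"
  shows "(\<forall>r\<in>Lambda B. L r = L (0, 0, 0)) \<or> (\<exists>a\<in>{1,2,3}. \<exists>j\<in>{1..B}. \<exists>p. domain_wall B R L a j p)"
proof (cases "\<exists>a\<in>{1,2,3}. \<exists>r. r \<in> Lambda B \<and> shift a r \<in> Lambda B \<and> L (shift a r) \<noteq> L r")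
  case False
  have "L r = L (0, 0, 0)" if "r \<in> Lambda B" for r
  proof (rule block_invariant[where P = "\<lambda>r. L r = L (0, 0, 0)" and u = "(0, 0, 0)"])
    fix b x assume "b \<in> {1,2,3}" "x \<in> Lambda B" "shift b x \<in> Lambda B"
    then have "L (shift b x) = L x"
      using False by blast
    then show "L (shift b x) = L (0, 0, 0) \<longleftrightarrow> L x = L (0, 0, 0)"
      by simp
  qed (simp_all add: that)
  then show ?thesis
    by blast
next
  case True
  then obtain a r0 where a: "a \<in> {1,2,3}" and r0: "r0 \<in> Lambda B" "shift a r0 \<in> Lambda B"
    and jump: "L (shift a r0) \<noteq> L r0"
    by blast
  have jump_eq: "L (shift a r0) = R a (L r0)"
    using edge_compatibleD[OF compat a r0] jump by blast
  have r0_lt: "coord a r0 < B"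
    using r0 a shift_in_Lambda_iff by blast
  define j where "j = Suc (coord a r0)"
  have j: "j \<in> {1..B}"
    using r0_lt by (simp add: j_def)
  define P where "P r \<longleftrightarrow> L (shift a r) \<noteq> L r \<and> L r = L r0 \<and> L (shift a r) = L (shift a r0)" for r
  have P_plane: "P r" if "r \<in> Lambda B" "coord a r = coord a r0" for r
  proof (rule plane_invariant[OF a _ r0(1) that])
    fix b r assume b: "b \<in> {1,2,3}" "b \<noteq> a" and r: "r \<in> Lambda B" "shift b r \<in> Lambda B" "coord a r = coord a r0"
    have "coord a r < B"
      using r(3) r0_lt by simp
    note transport = label_jump_transported[OF inv nc compat a b r(1,2) this]
    show "P (shift b r) \<longleftrightarrow> P r"
    proof
      assume P_br: "P (shift b r)"
      then have "L (shift a r) \<noteq> L r"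
        using transport(2) unfolding P_def by blast
      moreover have "L (shift b r) = L r \<and> L (shift a (shift b r)) = L (shift a r)"
        using transport(1) calculation by blast
      ultimately show "P r"
        using P_br unfolding P_def by simp
    next
      assume P_r: "P r"
      then have "L (shift b r) = L r \<and> L (shift a (shift b r)) = L (shift a r)"
        using transport(1) unfolding P_def by blast
      then show "P (shift b r)"
        using P_r unfolding P_def by metis
    qed
  qed (use jump in \<open>simp add: P_def\<close>)
  have "domain_wall B R L a j (L r0)"
    unfolding domain_wall_def
  proof (intro conjI ballI impI)
    show "R a (L r0) \<noteq> L r0"
      using jump jump_eq by simp
    show "L r = L r0" if "r \<in> Lambda B" "coord a r = j - 1" for r
      using P_plane that by (simp add: P_def j_def)
    show "L v = R a (L r0)" if v: "v \<in> Lambda B" "coord a v = j" for v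
    proof -
      define r where "r = set_coord a (coord a r0) v"
      have "r \<in> Lambda B" "coord a r = coord a r0"
        using v r0_lt by (simp_all add: r_def set_coord_in_Lambda)
      then have "L (shift a r) = L (shift a r0)"
        using P_plane by (simp add: P_def)
      moreover have shift_r: "shift a r = v"
        using v(2) set_coord_coord[of a v] by (simp add: r_def shift_set_coord j_def)
      ultimately show ?thesis
        using jump_eq by simp
    qed
  qed
  then show ?thesis
    using a j by blast
qed

lemma infdist_mirror:
  assumes "finite A" and mirror_closed: "\<And>p. p \<in> A \<Longrightarrow> mirror a p \<in> A"
  shows "infdist (mirror a x) A = infdist x A"
proof (cases "A = {}")
  case False
  have le: "infdist (mirror a y) A \<le> infdist y A" for y
  proof -
    obtain p where p: "p \<in> A" "infdist y A = dist y p"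
      using infdist_attains_inf[OF finite_imp_closed[OF \<open>finite A\<close>] False] by metis
    have "infdist (mirror a y) A \<le> dist (mirror a y) (mirror a p)"
      using mirror_closed[OF p(1)] by (rule infdist_le)
    also have "\<dots> = dist y p"
      by (simp add: dist_norm norm_mirror_diff)
    finally show ?thesis
      using p(2) by simp
  qed
  show ?thesis
    using le[of x] le[of "mirror a x"] by simp
qed (simp add: infdist_def)

lemma exists_labelling:
  fixes z :: "site \<Rightarrow> complex"
  assumes "finite A" and mirror_closed: "\<And>a p. a \<in> {1,2,3} \<Longrightarrow> p \<in> A \<Longrightarrow> mirror a p \<in> A"
    and sep: "\<And>p q. p \<in> A \<Longrightarrow> q \<in> A \<Longrightarrow> p \<noteq> q \<Longrightarrow> \<sigma> \<le> cmod (p - q)"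
    and steps: "\<And>a r. a \<in> {1,2,3} \<Longrightarrow> r \<in> Lambda B \<Longrightarrow> shift a r \<in> Lambda B \<Longrightarrow>
      cmod (z (shift a r) - z r) \<le> \<delta> \<or> cmod (z (shift a r) - mirror a (z r)) \<le> \<delta>"
    and "0 \<le> \<delta>" and r0: "r0 \<in> Lambda B" "p0 \<in> A" "cmod (z r0 - p0) \<le> \<epsilon>0"
    and small: "2 * (\<epsilon>0 + 3 * real B * \<delta>) + \<delta> < \<sigma>"
  obtains L where "\<And>r. r \<in> Lambda B \<Longrightarrow> L r \<in> A \<and> cmod (z r - L r) \<le> \<epsilon>0 + 3 * real B * \<delta>"
    and "edge_compatible B mirror L"
proof -
  define \<epsilon> where "\<epsilon> = \<epsilon>0 + 3 * real B * \<delta>"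
  have "A \<noteq> {}"
    using r0 by blast
  (* A is mirror-invariant, so the distance to A changes by at most delta along every edge. *)
  have "\<bar>infdist (z r) A - infdist (z r0) A\<bar> \<le> 3 * real B * \<delta>" if "r \<in> Lambda B" for r
  proof (rule block_drift[OF \<open>0 \<le> \<delta>\<close> _ r0(1) that])
    fix b x assume b: "b \<in> {1,2,3}" and x: "x \<in> Lambda B" "shift b x \<in> Lambda B"
    have "infdist (mirror b (z x)) A = infdist (z x) A"
      using infdist_mirror[OF \<open>finite A\<close> mirror_closed[OF b]] .
    then show "\<bar>infdist (z (shift b x)) A - infdist (z x) A\<bar> \<le> \<delta>"
      using steps[OF b x] infdist_triangle_abs[of "z (shift b x)" A "z x"]
        infdist_triangle_abs[of "z (shift b x)" A "mirror b (z x)"]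
      by (auto simp: dist_norm)
  qed
  moreover have "infdist (z r0) A \<le> \<epsilon>0"
    using infdist_le[OF r0(2), of "z r0"] r0(3) by (simp add: dist_norm)
  ultimately have near: "infdist (z r) A \<le> \<epsilon>" if "r \<in> Lambda B" for r
    using that unfolding \<epsilon>_def by fastforce
  have "\<exists>p. p \<in> A \<and> cmod (z r - p) \<le> \<epsilon>" if "r \<in> Lambda B" for r
    using infdist_attains_inf[OF finite_imp_closed[OF \<open>finite A\<close>] \<open>A \<noteq> {}\<close>, of "z r"] near[OF that]
    by (metis dist_norm)
  then obtain L where L: "\<And>r. r \<in> Lambda B \<Longrightarrow> L r \<in> A \<and> cmod (z r - L r) \<le> \<epsilon>"
    by metis
  have edges: "L (shift a r) = L r \<or> L (shift a r) = mirror a (L r)"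
    if a: "a \<in> {1,2,3}" and r: "r \<in> Lambda B" "shift a r \<in> Lambda B" for a r
  proof -
    have close_eq: "p = q" if "p \<in> A" "q \<in> A" "cmod (p - q) \<le> 2 * \<epsilon> + \<delta>" for p q
      using sep[OF that(1,2)] that(3) small unfolding \<epsilon>_def by force
    have Lr: "L r \<in> A" "cmod (z r - L r) \<le> \<epsilon>" and Lar: "L (shift a r) \<in> A" "cmod (z (shift a r) - L (shift a r)) \<le> \<epsilon>"
      using L r by auto
    consider "cmod (z (shift a r) - z r) \<le> \<delta>" | "cmod (z (shift a r) - mirror a (z r)) \<le> \<delta>"
      using steps[OF a r] by blast
    then show ?thesis
    proof cases
      case 1
      have "cmod (L (shift a r) - L r) \<le> cmod (L (shift a r) - z (shift a r)) + cmod (z (shift a r) - z r) + cmod (z r - L r)"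
        using norm_triangle_ineq[of "L (shift a r) - z (shift a r)" "z (shift a r) - z r"]
          norm_triangle_ineq[of "L (shift a r) - z r" "z r - L r"] by simp
      then show ?thesis
        using close_eq[OF Lar(1) Lr(1)] 1 Lr Lar by (simp add: norm_minus_commute)
    next
      case 2
      have "cmod (L (shift a r) - mirror a (L r)) \<le> cmod (L (shift a r) - z (shift a r))
          + cmod (z (shift a r) - mirror a (z r)) + cmod (mirror a (z r) - mirror a (L r))"
        using norm_triangle_ineq[of "L (shift a r) - z (shift a r)" "z (shift a r) - mirror a (z r)"]
          norm_triangle_ineq[of "L (shift a r) - mirror a (z r)" "mirror a (z r) - mirror a (L r)"] by simp
      then show ?thesis
        using close_eq[OF Lar(1) mirror_closed[OF a Lr(1)]] 2 Lr Lar by (simp add: norm_minus_commute norm_mirror_diff)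
    qed
  qed
  show thesis
    using that L edges unfolding \<epsilon>_def edge_compatible_def by blast
qed

lemma min_le_of_sum_ge_of_mult_less:
  fixes x y S P :: real
  assumes "0 \<le> x" "0 \<le> y" "0 < S" "S \<le> x + y" "x * y < P"
  shows "x \<le> 2 * P / S \<or> y \<le> 2 * P / S"
proof (rule ccontr)
  assume "\<not> ?thesis"
  then have gt: "2 * P / S < x" "2 * P / S < y"
    by auto
  have "0 \<le> x * y"
    using assms(1,2) by simp
  then have "0 \<le> 2 * P / S"
    using assms(3,5) by simp
  consider "S / 2 \<le> x" | "S / 2 \<le> y"
    using assms(4) by linarith
  then have "S / 2 * (2 * P / S) < x * y"
  proof cases
    case 1
    then show ?thesis
      using gt assms(3) \<open>0 \<le> 2 * P / S\<close> by (intro mult_le_less_imp_less) auto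
  next
    case 2
    then have "S / 2 * (2 * P / S) < y * x"
      using gt assms(3) \<open>0 \<le> 2 * P / S\<close> by (intro mult_le_less_imp_less) auto
    then show ?thesis
      by (simp add: mult.commute)
  qed
  then show False
    using assms by simp
qed

lemma hex_labels_apart:
  assumes "m \<in> hex_roots" "m' \<in> hex_roots" "m \<noteq> m'" "cmod (x - m) \<le> 1 / 4" "cmod (y - m') \<le> 1 / 4"
  shows "1 / 2 \<le> cmod (x - y)"
proof -
  have "1 \<le> cmod (m - m')"
    using hex_roots_separated assms by blast
  also have "\<dots> \<le> cmod (m - x) + cmod (x - y) + cmod (y - m')"
    using norm_triangle_ineq[of "m - x" "x - y"] norm_triangle_ineq[of "m - y" "y - m'"] by simp
  finally show ?thesis
    using assms by (simp add: norm_minus_commute)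
qed

section \<open>Bad spin-wave blocks\<close>

definition Bad_cover :: "nat \<Rightarrow> real \<Rightarrow> real \<Rightarrow> real \<Rightarrow> nat \<Rightarrow> real \<Rightarrow> config set" where
  "Bad_cover B \<Gamma> \<kappa> \<Delta> s t0 = (\<Union>i\<in>{1..s}. Bad0 B \<Gamma> \<kappa> \<Delta> (theta_star t0 s i) \<union>
     (\<Union>a\<in>{1,2,3}. \<Union>j\<in>{1..B}. Bad_aj B \<Gamma> \<kappa> \<Delta> (theta_star t0 s i) a j))"

locale spin_wave_regime =
  fixes \<kappa> \<Gamma> \<Delta> :: real and B s :: nat
  assumes kappa_pos: "0 < \<kappa>" and Gamma_pos: "0 < \<Gamma>" and B_pos: "1 \<le> B" and s_pos: "1 \<le> s"
    and kappa_le: "\<kappa> \<le> 1 / 100" and B_sqrt_Gamma_le: "real B * sqrt \<Gamma> \<le> 1 / 100 * \<kappa>"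
    and Delta_eq: "\<Delta> = 12 * real B * \<Gamma> / \<kappa>" and s_Delta_gt: "real s * \<Delta> > 4 * pi"
begin

lemma sqrt_Gamma_le: "sqrt \<Gamma> \<le> \<kappa> / 100"
proof -
  have "1 * sqrt \<Gamma> \<le> real B * sqrt \<Gamma>"
    using B_pos Gamma_pos by (intro mult_right_mono) auto
  then show ?thesis
    using B_sqrt_Gamma_le by simp
qed

lemma B_Gamma_eq: "real B * \<Gamma> = \<kappa> * \<Delta> / 12"
  using Delta_eq kappa_pos by (simp add: field_simps)

lemma Gamma_le: "\<Gamma> \<le> \<kappa> * \<Delta> / 12"
proof -
  have "1 * \<Gamma> \<le> real B * \<Gamma>"
    using B_pos Gamma_pos by (intro mult_right_mono) auto
  then show ?thesis
    using B_Gamma_eq by (simp add: algebra_simps)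
qed

lemma Delta_pos: "0 < \<Delta>"
  using Delta_eq kappa_pos Gamma_pos B_pos by simp

lemma Delta_le: "\<Delta> \<le> \<kappa> / 100"
proof -
  have "\<kappa> * \<Delta> / 12 = (real B * sqrt \<Gamma>) * sqrt \<Gamma>"
    using Gamma_pos by (simp flip: B_Gamma_eq)
  also have "\<dots> \<le> (\<kappa> / 100) * (\<kappa> / 100)"
    using B_sqrt_Gamma_le sqrt_Gamma_le kappa_pos Gamma_pos by (intro mult_mono) auto
  finally have "\<kappa> * \<Delta> \<le> \<kappa> * (12 * \<kappa> / 10000)"
    by (simp add: algebra_simps)
  then have "\<Delta> \<le> 12 * \<kappa> / 10000"
    using kappa_pos by simp
  then show ?thesis
    using kappa_pos by simp
qed

lemma pi_div_s_less: "pi / real s < \<Delta> / 4"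
  using s_Delta_gt s_pos by (simp add: field_simps)

lemma grid_point_near:
  assumes "cmod c = 1"
  obtains i where "i \<in> {1..s}" "cmod (c - cis (theta_star t0 s i)) < \<Delta> / 4"
proof -
  have "c \<noteq> 0"
    using assms by auto
  then have "cis (Arg c) = c"
    using assms by (simp add: cis_Arg sgn_div_norm)
  moreover obtain i where "i \<in> {1..s}" "cmod (cis (Arg c) - cis (theta_star t0 s i)) \<le> pi / real s"
    using theta_star_dense[OF s_pos] by blast
  ultimately have "cmod (c - cis (theta_star t0 s i)) \<le> pi / real s"
    by simp
  then have "cmod (c - cis (theta_star t0 s i)) < \<Delta> / 4"
    using pi_div_s_less by (rule order_le_less_trans)
  with \<open>i \<in> {1..s}\<close> show ?thesis
    by (rule that)
qed

end

locale bad_spin_wave = spin_wave_regime +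
  fixes \<theta> :: config
  assumes bad_SW: "\<theta> \<in> Bad_SW B \<Gamma> \<kappa>"
begin

abbreviation spin :: "site \<Rightarrow> complex" where
  "spin r \<equiv> cis (\<theta> r)"

lemma theta_good_edges: "good_edges B \<Gamma> \<theta>"
  using bad_SW by (simp add: Bad_SW_def Bad_E_def)

lemma theta_Bad: "\<theta> \<in> Bad B \<Gamma> \<kappa>"
  using bad_SW by (simp add: Bad_SW_def)

lemma edge_product_less:
  assumes "a \<in> {1,2,3}" "r \<in> Lambda B" "shift a r \<in> Lambda B"
  shows "cmod (spin (shift a r) - spin r) * cmod (spin (shift a r) - mirror a (spin r)) < 2 * \<Gamma>"
proof -
  have "\<bar>Scomp a \<theta> r - Scomp a \<theta> (shift a r)\<bar> < \<Gamma>"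
    using theta_good_edges assms unfolding good_edges_def by blast
  then show ?thesis
    using norm_cis_diff_mult_mirror[of "\<theta> r" "\<theta> (shift a r)" a]
    by (simp add: Scomp_def norm_minus_commute)
qed

lemma edge_pinned:
  assumes L: "\<And>r. r \<in> Lambda B \<Longrightarrow> L r \<in> hex_roots \<and> cmod (spin r - L r) \<le> 1 / 4"
    and a: "a \<in> {1,2,3}" and r: "r \<in> Lambda B" "shift a r \<in> Lambda B"
  shows "L (shift a r) \<noteq> L r \<Longrightarrow> cmod (spin (shift a r) - mirror a (spin r)) < 4 * \<Gamma>"
    and "L (shift a r) \<noteq> mirror a (L r) \<Longrightarrow> cmod (spin (shift a r) - spin r) < 4 * \<Gamma>"
proof -
  have pinned: "x < 4 * \<Gamma>" if "0 \<le> x" "1 / 2 \<le> y" "x * y < 2 * \<Gamma>" "x * y = y * x" for x y :: real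
  proof -
    have "x * (1 / 2) \<le> x * y"
      using that by (intro mult_left_mono) auto
    then show ?thesis
      using that by linarith
  qed
  note product = edge_product_less[OF a r]
  have Lr: "L r \<in> hex_roots" "cmod (spin r - L r) \<le> 1 / 4"
    and Lar: "L (shift a r) \<in> hex_roots" "cmod (spin (shift a r) - L (shift a r)) \<le> 1 / 4"
    using L r by auto
  show "cmod (spin (shift a r) - mirror a (spin r)) < 4 * \<Gamma>" if "L (shift a r) \<noteq> L r"
    using hex_labels_apart[OF Lar(1) Lr(1) that Lar(2) Lr(2)] product
    by (intro pinned[where y = "cmod (spin (shift a r) - spin r)"]) (auto simp: mult.commute)
  have "cmod (mirror a (spin r) - mirror a (L r)) \<le> 1 / 4"
    using Lr(2) by (simp add: norm_mirror_diff)
  then show "cmod (spin (shift a r) - spin r) < 4 * \<Gamma>" if "L (shift a r) \<noteq> mirror a (L r)"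
    using hex_labels_apart[OF Lar(1) mirror_hex_roots[OF a Lr(1)] that Lar(2)] product
    by (intro pinned) auto
qed

lemma near_mod_Delta_if_close:
  assumes "cmod (cis x - c) \<le> \<Delta> / 2" "cmod (c - cis t) < \<Delta> / 4"
  shows "near_mod x t \<Delta>"
proof (rule near_mod_if_norm_cis_diff_small)
  show "0 < \<Delta>" "\<Delta> \<le> 1"
    using Delta_pos Delta_le kappa_le by auto
  have "cmod (cis x - cis t) \<le> cmod (cis x - c) + cmod (c - cis t)"
    using norm_triangle_ineq[of "cis x - c" "c - cis t"] by simp
  then show "cmod (cis x - cis t) < 9 / 10 * \<Delta>"
    using assms Delta_pos by linarith
qed

lemma Bad0_cover:
  assumes "cmod c = 1" and close: "\<And>r. r \<in> Lambda B \<Longrightarrow> cmod (spin r - c) \<le> \<Delta> / 2"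
  shows "\<theta> \<in> Bad_cover B \<Gamma> \<kappa> \<Delta> s t0"
proof -
  obtain i where i: "i \<in> {1..s}" and ci: "cmod (c - cis (theta_star t0 s i)) < \<Delta> / 4"
    using grid_point_near[OF assms(1)] by blast
  have "\<theta> \<in> Bad0 B \<Gamma> \<kappa> \<Delta> (theta_star t0 s i)"
    using theta_Bad near_mod_Delta_if_close[OF close ci] by (simp add: Bad0_def)
  then show ?thesis
    using i unfolding Bad_cover_def by blast
qed

lemma domain_wall_cover:
  assumes c: "cmod c = 1" and a: "a \<in> {1,2,3}" and j: "j \<in> {1..B}"
    and far: "3 * \<kappa> / 2 \<le> cmod (c - cis (phi a))" "3 * \<kappa> / 2 \<le> cmod (c + cis (phi a))"
    and lower: "\<And>r. r \<in> Lambda B \<Longrightarrow> coord a r = j - 1 \<Longrightarrow> cmod (spin r - c) \<le> \<Delta> / 2"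
    and upper: "\<And>r. r \<in> Lambda B \<Longrightarrow> coord a r = j \<Longrightarrow> cmod (spin r - mirror a c) \<le> \<Delta> / 2"
  shows "\<theta> \<in> Bad_cover B \<Gamma> \<kappa> \<Delta> s t0"
proof -
  obtain i where i: "i \<in> {1..s}" and ci: "cmod (c - cis (theta_star t0 s i)) < \<Delta> / 4"
    using grid_point_near[OF c] by blast
  define ts where "ts = theta_star t0 s i"
  have ci': "cmod (mirror a c - cis (2 * phi a - ts)) < \<Delta> / 4"
    using ci by (simp add: ts_def norm_mirror_diff flip: mirror_cis)
  have "\<Delta> / 4 \<le> \<kappa> / 2"
    using Delta_le kappa_pos by simp
  then have "\<kappa> \<le> cmod (cis ts - cis (phi a))" "\<kappa> \<le> cmod (cis ts + cis (phi a))"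
    using far ci norm_triangle_ineq[of "c - cis ts" "cis ts - cis (phi a)"]
      norm_triangle_ineq[of "c - cis ts" "cis ts + cis (phi a)"]
    by (simp_all add: ts_def)
  then have "\<not> near_mod ts (phi a) \<kappa>" "\<not> near_mod ts (phi a + pi) \<kappa>"
    using norm_cis_diff_less_if_near_mod[of ts] by (fastforce simp flip: minus_cis)+
  then have "\<theta> \<in> Bad_aj B \<Gamma> \<kappa> \<Delta> ts a j"
    using bad_SW near_mod_Delta_if_close[OF lower ci[folded ts_def]]
      near_mod_Delta_if_close[OF upper ci']
    by (simp add: Bad_aj_def hyperplane_def)
  then show ?thesis
    using i a j unfolding Bad_cover_def ts_def by blast
qed

lemma not_all_close_to_hex_root:
  assumes "m \<in> hex_roots"
  shows "\<not> (\<forall>r\<in>Lambda B. cmod (spin r - m) \<le> 39 / 25 * \<kappa>)"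
proof
  assume close: "\<forall>r\<in>Lambda B. cmod (spin r - m) \<le> 39 / 25 * \<kappa>"
  obtain \<tau> where \<tau>: "\<tau> \<in> {1..6::nat}" "m = cis (pi / 3 * real \<tau>)"
    using hex_root_eq_cis[OF assms] by blast
  have "near_mod (\<theta> r) (pi / 3 * real \<tau>) (2 * \<kappa>)" if "r \<in> Lambda B" for r
    using close that \<tau>(2) kappa_pos kappa_le by (intro near_mod_if_norm_cis_diff_small) auto
  then have "good_block B \<Gamma> \<kappa> \<theta>"
    using theta_good_edges \<tau>(1) unfolding good_block_def by blast
  then show False
    using theta_Bad by (simp add: Bad_def)
qed

lemma in_plane_step_small:
  assumes L: "\<And>r. r \<in> Lambda B \<Longrightarrow> L r \<in> hex_roots \<and> cmod (spin r - L r) \<le> 1 / 4"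
    and wall: "domain_wall B mirror L a j p" and a: "a \<in> {1,2,3}" and j: "j \<in> {1..B}"
    and b: "b \<in> {1,2,3}" "b \<noteq> a" and r: "r \<in> Lambda B" "shift b r \<in> Lambda B" "coord a r = j - 1"
  shows "cmod (spin (shift b r) - spin r) \<le> 12 * \<Gamma>"
proof -
  have br: "coord a (shift b r) = j - 1"
    using coord_shift_other[of b a r] a b r by simp
  then have Lr: "L r = p" "L (shift b r) = p"
    using wall r unfolding domain_wall_def by auto
  show ?thesis
  proof (cases "mirror b p = p")
    case False
    then have "cmod (spin (shift b r) - spin r) < 4 * \<Gamma>"
      using edge_pinned(2)[OF L b(1) r(1,2)] Lr by simp
    then show ?thesis
      using Gamma_pos by simp
  next
    case True
    (* mirror b fixes p but not mirror a p: go around the plaquette through plane j. *)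
    define w w' where "w = shift a r" and "w' = shift a (shift b r)"
    have "j - 1 < B"
      using j by auto
    then have w: "w \<in> Lambda B" "w' \<in> Lambda B" "shift b w = w'"
      using r br a by (simp_all add: w_def w'_def shift_in_Lambda_iff shift_commute)
    have "coord a w = j" "coord a w' = j"
      using r(3) br j by (simp_all add: w_def w'_def)
    then have Lw: "L w = mirror a p" "L w' = mirror a p"
      using wall w unfolding domain_wall_def by auto
    have "p \<noteq> 0"
      using L[OF r(1)] Lr norm_hex_root by force
    then have "mirror b (mirror a p) \<noteq> mirror a p"
      using mirrors_noncommuting(2)[OF b(1) a b(2)] True by metis
    then have "cmod (spin w' - spin w) < 4 * \<Gamma>"
      using edge_pinned(2)[OF L b(1) w(1)] w(2,3) Lw by simp
    moreover have "cmod (spin w - mirror a (spin r)) < 4 * \<Gamma>"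
      "cmod (spin w' - mirror a (spin (shift b r))) < 4 * \<Gamma>"
      using edge_pinned(1)[OF L a r(1)] edge_pinned(1)[OF L a r(2)] w Lw Lr wall
      unfolding domain_wall_def w_def w'_def by auto
    moreover have "cmod (spin (shift b r) - spin r) = cmod (mirror a (spin (shift b r)) - mirror a (spin r))"
      by (simp only: norm_mirror_diff)
    moreover have "cmod (mirror a (spin (shift b r)) - spin w) \<le> cmod (spin w' - mirror a (spin (shift b r)))
        + cmod (spin w' - spin w)"
      using norm_triangle_ineq[of "mirror a (spin (shift b r)) - spin w'" "spin w' - spin w"]
      by (simp add: norm_minus_commute)
    moreover have "cmod (mirror a (spin (shift b r)) - mirror a (spin r)) \<le> cmod (mirror a (spin (shift b r)) - spin w)
        + cmod (spin w - mirror a (spin r))"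
      using norm_triangle_ineq[of "mirror a (spin (shift b r)) - spin w" "spin w - mirror a (spin r)"]
      by simp
    ultimately show ?thesis
      by linarith
  qed
qed

lemma domain_wall_plane_close:
  assumes L: "\<And>r. r \<in> Lambda B \<Longrightarrow> L r \<in> hex_roots \<and> cmod (spin r - L r) \<le> 1 / 4"
    and wall: "domain_wall B mirror L a j p" and a: "a \<in> {1,2,3}" and j: "j \<in> {1..B}"
    and u: "u \<in> Lambda B" "coord a u = j - 1" and v: "v \<in> Lambda B" "coord a v = j - 1"
  shows "cmod (spin v - spin u) \<le> 2 * \<kappa> * \<Delta>"
proof -
  have "\<bar>cmod (spin v - spin u) - cmod (spin u - spin u)\<bar> \<le> 2 * real B * (12 * \<Gamma>)"
  proof (rule plane_drift[OF a _ _ u(1) v(1)])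
    fix b r assume "b \<in> {1,2,3}" "b \<noteq> a" "r \<in> Lambda B" "shift b r \<in> Lambda B" "coord a r = coord a u"
    then have "cmod (spin (shift b r) - spin r) \<le> 12 * \<Gamma>"
      using in_plane_step_small[OF L wall a j] u(2) by simp
    then show "\<bar>cmod (spin (shift b r) - spin u) - cmod (spin r - spin u)\<bar> \<le> 12 * \<Gamma>"
      using norm_triangle_ineq3[of "spin (shift b r) - spin u" "spin r - spin u"] by simp
  qed (use Gamma_pos u v in auto)
  then show ?thesis
    using B_Gamma_eq by (simp add: algebra_simps)
qed

lemma near_domain_wall_cover:
  assumes L: "\<And>r. r \<in> Lambda B \<Longrightarrow> L r \<in> hex_roots \<and> cmod (spin r - L r) \<le> 1 / 4"
    and wall: "domain_wall B mirror L a j p" and a: "a \<in> {1,2,3}" and j: "j \<in> {1..B}"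
  shows "\<theta> \<in> Bad_cover B \<Gamma> \<kappa> \<Delta> s t0"
proof -
  define u where "u = set_coord a (j - 1) (0, 0, 0)"
  have "j - 1 \<le> B"
    using j by auto
  then have u: "u \<in> Lambda B" "coord a u = j - 1"
    unfolding u_def using set_coord_in_Lambda[OF zero_in_Lambda] coord_set_coord by blast+
  have "\<kappa> * \<Delta> \<le> \<Delta> / 100"
    using mult_right_mono[OF kappa_le, of \<Delta>] Delta_pos by simp
  then have small: "2 * \<kappa> * \<Delta> \<le> \<Delta> / 4" "4 * \<Gamma> \<le> \<Delta> / 4"
    using Gamma_le Delta_pos by linarith+
  have plane: "cmod (spin v - spin u) \<le> \<Delta> / 4" if "v \<in> Lambda B" "coord a v = j - 1" for v
  proof -
    have "cmod (spin v - spin u) \<le> 2 * \<kappa> * \<Delta>"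
      by (rule domain_wall_plane_close[OF _ wall a j u that]) (use L in blast)
    then show ?thesis
      using small by linarith
  qed
  then have lower: "cmod (spin v - spin u) \<le> \<Delta> / 2" if "v \<in> Lambda B" "coord a v = j - 1" for v
    using that Delta_pos by fastforce
  have upper: "cmod (spin v - mirror a (spin u)) \<le> \<Delta> / 2" if v: "v \<in> Lambda B" "coord a v = j" for v
  proof -
    define r where "r = set_coord a (j - 1) v"
    have r: "r \<in> Lambda B" "coord a r = j - 1"
      unfolding r_def using set_coord_in_Lambda[OF v(1) \<open>j - 1 \<le> B\<close>] coord_set_coord by blast+
    have "shift a r = v"
      using v(2) j set_coord_coord[of a v] by (simp add: r_def shift_set_coord)
    moreover have "L v \<noteq> L r"
      using wall r v unfolding domain_wall_def by auto
    ultimately have "cmod (spin v - mirror a (spin r)) < 4 * \<Gamma>"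
      using edge_pinned(1)[OF L a r(1)] v(1) by auto
    moreover have "cmod (mirror a (spin r) - mirror a (spin u)) \<le> \<Delta> / 4"
      using plane[OF r] by (simp add: norm_mirror_diff)
    ultimately show ?thesis
      using small norm_triangle_ineq[of "spin v - mirror a (spin r)" "mirror a (spin r) - mirror a (spin u)"]
      by simp
  qed
  have p: "L u = p" "mirror a p \<noteq> p"
    using wall u unfolding domain_wall_def by auto
  have far: "3 * \<kappa> / 2 \<le> cmod (spin u - \<mu>)" if "\<mu> \<in> hex_roots" "mirror a \<mu> = \<mu>" for \<mu>
  proof -
    have "1 \<le> cmod (p - \<mu>)"
      using hex_roots_separated L[OF u(1)] p that by metis
    also have "\<dots> \<le> cmod (p - spin u) + cmod (spin u - \<mu>)"
      using norm_triangle_ineq[of "p - spin u" "spin u - \<mu>"] by simp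
    finally show ?thesis
      using L[OF u(1)] p kappa_le by (simp add: norm_minus_commute)
  qed
  show ?thesis
  proof (rule domain_wall_cover[OF _ a j _ _ lower upper])
    show "3 * \<kappa> / 2 \<le> cmod (spin u - cis (phi a))" "3 * \<kappa> / 2 \<le> cmod (spin u + cis (phi a))"
      using far[OF cis_phi_in_hex_roots(1)[OF a]] far[OF cis_phi_in_hex_roots(2)[OF a]] mirror_fixes
      by simp_all
  qed simp
qed

lemma near_hex_root_case:
  assumes r0: "r0 \<in> Lambda B" "m0 \<in> hex_roots" "cmod (spin r0 - m0) < 3 * \<kappa> / 2"
  shows "\<theta> \<in> Bad_cover B \<Gamma> \<kappa> \<Delta> s t0"
proof -
  define e where "e = 3 * \<kappa> / 2 + 3 * real B * (2 * sqrt \<Gamma>)"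
  have e_le: "e \<le> 39 / 25 * \<kappa>"
    using B_sqrt_Gamma_le unfolding e_def by linarith
  have steps: "cmod (spin (shift a r) - spin r) \<le> 2 * sqrt \<Gamma> \<or> cmod (spin (shift a r) - mirror a (spin r)) \<le> 2 * sqrt \<Gamma>"
    if "a \<in> {1,2,3}" "r \<in> Lambda B" "shift a r \<in> Lambda B" for a r
  proof (rule ccontr)
    assume "\<not> ?thesis"
    then have "2 * sqrt \<Gamma> * (2 * sqrt \<Gamma>) < cmod (spin (shift a r) - spin r) * cmod (spin (shift a r) - mirror a (spin r))"
      using Gamma_pos by (intro mult_strict_mono) auto
    then show False
      using edge_product_less[OF that] Gamma_pos by simp
  qed
  obtain L where L: "\<And>r. r \<in> Lambda B \<Longrightarrow> L r \<in> hex_roots \<and> cmod (spin r - L r) \<le> e"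
    and compat: "edge_compatible B mirror L"
  proof (rule exists_labelling[of hex_roots 1 B spin "2 * sqrt \<Gamma>" r0 m0 "3 * \<kappa> / 2"])
    have "2 * e + 2 * sqrt \<Gamma> < 1"
      using e_le sqrt_Gamma_le kappa_le by linarith
    then show "2 * (3 * \<kappa> / 2 + 3 * real B * (2 * sqrt \<Gamma>)) + 2 * sqrt \<Gamma> < 1"
      by (simp only: e_def)
  qed (use steps r0 that hex_roots_separated mirror_hex_roots Gamma_pos in \<open>auto simp: e_def\<close>)
  have L4: "L r \<in> hex_roots \<and> cmod (spin r - L r) \<le> 1 / 4" if "r \<in> Lambda B" for r
    using L[OF that] e_le kappa_le by auto
  have "(\<forall>r\<in>Lambda B. L r = L (0, 0, 0)) \<or> (\<exists>a\<in>{1,2,3}. \<exists>j\<in>{1..B}. \<exists>p. domain_wall B mirror L a j p)"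
  proof (rule constant_or_domain_wall[OF _ _ compat])
    fix a b r assume "a \<in> {1,2,3::nat}" "b \<in> {1,2,3::nat}" "a \<noteq> b" "r \<in> Lambda B"
    moreover have "L r \<noteq> 0"
      using L4[OF \<open>r \<in> Lambda B\<close>] norm_hex_root by force
    ultimately show "mirror a (mirror b (L r)) \<noteq> L r \<and> mirror a (mirror b (L r)) \<noteq> mirror b (mirror a (L r))"
      using mirrors_noncommuting by blast
  qed simp
  then show ?thesis
  proof
    assume "\<forall>r\<in>Lambda B. L r = L (0, 0, 0)"
    then have "\<forall>r\<in>Lambda B. cmod (spin r - L (0, 0, 0)) \<le> 39 / 25 * \<kappa>"
      using L e_le by fastforce
    then show ?thesis
      using not_all_close_to_hex_root L[OF zero_in_Lambda] by blast
  next
    assume "\<exists>a\<in>{1,2,3}. \<exists>j\<in>{1..B}. \<exists>p. domain_wall B mirror L a j p"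
    then show ?thesis
      using near_domain_wall_cover[OF L4] by blast
  qed
qed

lemma far_from_hex_roots_case:
  assumes far: "\<And>r m. r \<in> Lambda B \<Longrightarrow> m \<in> hex_roots \<Longrightarrow> 3 * \<kappa> / 2 \<le> cmod (spin r - m)"
  shows "\<theta> \<in> Bad_cover B \<Gamma> \<kappa> \<Delta> s t0"
proof -
  (* Here |spin r - mirror a (spin r)| >= 21 kappa/10, so one factor of the edge product is <= delta. *)
  define \<delta> where "\<delta> = 2 * (2 * \<Gamma>) / (21 * \<kappa> / 10)"
  define w where "w = spin (0, 0, 0)"
  have \<delta>_pos: "0 \<le> \<delta>"
    using Gamma_pos kappa_pos by (simp add: \<delta>_def)
  have e_eq: "3 * real B * \<delta> = 10 / 21 * \<Delta>"
    using kappa_pos by (simp add: \<delta>_def Delta_eq field_simps)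
  have steps: "cmod (spin (shift a r) - spin r) \<le> \<delta> \<or> cmod (spin (shift a r) - mirror a (spin r)) \<le> \<delta>"
    if a: "a \<in> {1,2,3}" and r: "r \<in> Lambda B" "shift a r \<in> Lambda B" for a r
  proof -
    have "3 * \<kappa> / 2 \<le> cmod (spin r - cis (phi a))" "3 * \<kappa> / 2 \<le> cmod (spin r + cis (phi a))"
      using far[OF r(1) cis_phi_in_hex_roots(1)[OF a]] far[OF r(1) cis_phi_in_hex_roots(2)[OF a]] by simp_all
    then have "7 / 5 * (3 * \<kappa> / 2) \<le> cmod (spin r - mirror a (spin r))"
      using kappa_pos by (intro norm_diff_mirror_ge) auto
    also have "\<dots> \<le> cmod (spin (shift a r) - spin r) + cmod (spin (shift a r) - mirror a (spin r))"
      using norm_triangle_ineq[of "spin r - spin (shift a r)" "spin (shift a r) - mirror a (spin r)"]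
      by (simp add: norm_minus_commute)
    finally show ?thesis
      unfolding \<delta>_def using edge_product_less[OF a r] kappa_pos
      by (intro min_le_of_sum_ge_of_mult_less) auto
  qed
  have w_far: "\<forall>m\<in>hex_roots. 3 * \<kappa> / 2 \<le> cmod (w - m)"
    using far by (simp add: w_def)
  obtain L where L: "\<And>r. r \<in> Lambda B \<Longrightarrow> L r \<in> dihedral_orbit w \<and> cmod (spin r - L r) \<le> 0 + 3 * real B * \<delta>"
    and compat: "edge_compatible B mirror L"
  proof (rule exists_labelling[of "dihedral_orbit w" "7 / 5 * (3 * \<kappa> / 2)" B spin \<delta> "(0, 0, 0)" w 0])
    define E where "E = 3 * real B * \<delta>"
    have "1 * \<delta> \<le> E"
      unfolding E_def using B_pos \<delta>_pos by (intro mult_right_mono) auto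
    then have "2 * E + \<delta> < 21 / 10 * \<kappa>"
      using e_eq Delta_le kappa_pos unfolding E_def[symmetric] by linarith
    then show "2 * (0 + 3 * real B * \<delta>) + \<delta> < 7 / 5 * (3 * \<kappa> / 2)"
      unfolding E_def by simp
  qed (use w_far kappa_pos kappa_le steps \<delta>_pos that mirror_dihedral_orbit self_in_dihedral_orbit
      dihedral_orbit_separated[of w "3 * \<kappa> / 2"] in \<open>auto simp: w_def\<close>)
  have w_unit: "cmod w = 1"
    by (simp add: w_def)
  have L': "L r \<in> dihedral_orbit w" "cmod (L r) = 1" "cmod (spin r - L r) \<le> \<Delta> / 2" if "r \<in> Lambda B" for r
    using L[OF that] e_eq Delta_pos norm_dihedral_orbit[OF w_unit] by auto
  have "(\<forall>r\<in>Lambda B. L r = L (0, 0, 0)) \<or> (\<exists>a\<in>{1,2,3}. \<exists>j\<in>{1..B}. \<exists>p. domain_wall B mirror L a j p)"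
  proof (rule constant_or_domain_wall[OF _ _ compat])
    fix a b r assume "a \<in> {1,2,3::nat}" "b \<in> {1,2,3::nat}" "a \<noteq> b" "r \<in> Lambda B"
    moreover have "L r \<noteq> 0"
      using L'(2)[OF \<open>r \<in> Lambda B\<close>] by force
    ultimately show "mirror a (mirror b (L r)) \<noteq> L r \<and> mirror a (mirror b (L r)) \<noteq> mirror b (mirror a (L r))"
      using mirrors_noncommuting by blast
  qed simp
  then show ?thesis
  proof
    assume const: "\<forall>r\<in>Lambda B. L r = L (0, 0, 0)"
    have "cmod (spin r - L (0, 0, 0)) \<le> \<Delta> / 2" if "r \<in> Lambda B" for r
      using L'(3)[OF that] const that by metis
    then show ?thesis
      using L'(2)[OF zero_in_Lambda] by (rule Bad0_cover[rotated])
  next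
    assume "\<exists>a\<in>{1,2,3}. \<exists>j\<in>{1..B}. \<exists>p. domain_wall B mirror L a j p"
    then obtain a j p where a: "a \<in> {1,2,3}" and j: "j \<in> {1..B}" and wall: "domain_wall B mirror L a j p"
      by blast
    define u where "u = set_coord a (j - 1) (0, 0, 0)"
    have "j - 1 \<le> B"
      using j by auto
    then have u: "u \<in> Lambda B" "coord a u = j - 1"
      unfolding u_def using set_coord_in_Lambda[OF zero_in_Lambda] coord_set_coord by blast+
    then have "p \<in> dihedral_orbit w"
      using L'(1)[OF u(1)] wall unfolding domain_wall_def by auto
    then have p: "cmod p = 1" "\<forall>m\<in>hex_roots. 3 * \<kappa> / 2 \<le> cmod (p - m)"
      using norm_dihedral_orbit[OF w_unit] dihedral_orbit_far_from_hex_roots[OF w_far] by auto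
    show ?thesis
    proof (rule domain_wall_cover[OF p(1) a j])
      have "cmod (p + cis (phi a)) = cmod (p - (- cis (phi a)))"
        by simp
      then show "3 * \<kappa> / 2 \<le> cmod (p - cis (phi a))" "3 * \<kappa> / 2 \<le> cmod (p + cis (phi a))"
        using p(2) cis_phi_in_hex_roots[OF a] by auto
      show "cmod (spin r - p) \<le> \<Delta> / 2" if "r \<in> Lambda B" "coord a r = j - 1" for r
        using L'(3)[OF that(1)] wall that unfolding domain_wall_def by auto
      show "cmod (spin r - mirror a p) \<le> \<Delta> / 2" if "r \<in> Lambda B" "coord a r = j" for r
        using L'(3)[OF that(1)] wall that unfolding domain_wall_def by auto
    qed
  qed
qed

lemma Bad_SW_in_cover: "\<theta> \<in> Bad_cover B \<Gamma> \<kappa> \<Delta> s t0"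
proof (cases "\<exists>r\<in>Lambda B. \<exists>m\<in>hex_roots. cmod (spin r - m) < 3 * \<kappa> / 2")
  case True
  then show ?thesis
    using near_hex_root_case by blast
next
  case False
  then show ?thesis
    by (intro far_from_hex_roots_case) (auto simp: not_less)
qed

end

theorem theorem6p4:
  "\<exists>c0::real. c0 > 0 \<and>
     (\<forall>(\<kappa>::real) (\<Gamma>::real) (B::nat) (s::nat) (t0::real) (\<Delta>::real).
        0 < \<kappa> \<longrightarrow> 0 < \<Gamma> \<longrightarrow> 1 \<le> B \<longrightarrow> 1 \<le> s \<longrightarrow>
        \<kappa> \<le> c0 \<longrightarrow> real B * sqrt \<Gamma> \<le> c0 * \<kappa> \<longrightarrow>
        \<Delta> = 12 * real B * \<Gamma> / \<kappa> \<longrightarrow> real s * \<Delta> > 4 * pi \<longrightarrow>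
        Bad_SW B \<Gamma> \<kappa> \<subseteq>
          (\<Union>i\<in>{1..s}. Bad0 B \<Gamma> \<kappa> \<Delta> (theta_star t0 s i) \<union>
             (\<Union>a\<in>{1,2,3}. \<Union>j\<in>{1..B}. Bad_aj B \<Gamma> \<kappa> \<Delta> (theta_star t0 s i) a j)))"
proof (intro exI[of _ "1 / 100"] conjI allI impI subsetI)
  fix \<kappa> \<Gamma> \<Delta> t0 :: real and B s :: nat and \<theta> :: config
  assume "0 < \<kappa>" "0 < \<Gamma>" "1 \<le> B" "1 \<le> s" "\<kappa> \<le> 1 / 100" "real B * sqrt \<Gamma> \<le> 1 / 100 * \<kappa>"
    "\<Delta> = 12 * real B * \<Gamma> / \<kappa>" "real s * \<Delta> > 4 * pi" "\<theta> \<in> Bad_SW B \<Gamma> \<kappa>"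
  then interpret bad_spin_wave \<kappa> \<Gamma> \<Delta> B s \<theta>
    by unfold_locales
  show "\<theta> \<in> (\<Union>i\<in>{1..s}. Bad0 B \<Gamma> \<kappa> \<Delta> (theta_star t0 s i) \<union>
      (\<Union>a\<in>{1,2,3}. \<Union>j\<in>{1..B}. Bad_aj B \<Gamma> \<kappa> \<Delta> (theta_star t0 s i) a j))"
    using Bad_SW_in_cover[of t0] by (simp add: Bad_cover_def)
qed simp

end
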